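(* Let $d<\infty$, let $f$ be the embedding map of an analytic disc $V\subset\mathbb{B}_d$ attached to the unit sphere, and let $\mu(z)=\lambda\frac{\alpha-z}{1-\bar\alpha z}$ with $\lambda\in\mathbb{T}$, $\alpha\in\mathbb{D}$. Then for all $\xi\in\mathbb{T}$, $$A_{f\circ\mu}(\xi)=A_f(\mu(\xi))\,\frac{1-|\alpha|^2}{|\alpha-\xi|^2}.$$
   Context: $\mathbb{D}$ is the open unit disc, $\mathbb{T}$ the unit circle, $\mathbb{B}_d$ the open unit ball of $\mathbb{C}^d$. The Drury–Arveson space $H^2_d$ is the RKHS on $\mathbb{B}_d$ with kernel $1/(1-\langle z,w\rangle)$, with multiplier algebra $\mathcal{M}_d$; a variety is a common zero set of a family of functions in $\mathcal{M}_d$. An analytic disc attached to the unit sphere is a variety $V\subset\mathbb{B}_d$ for which there is an injective analytic $f:\mathbb{D}\to\mathbb{B}_d$ with $f'\neq0$ on $\mathbb{D}$, $V=f(\mathbb{D})$, $f$ extends to a $C^2$ map on $\overline{\mathbb{D}}$, and for $x\in\overline{\mathbb{D}}$, $\|f(x)\|=1$ iff $|x|=1$ ($f$ is an embedding map). For a $C^1$ map $h$ on $\overline{\mathbb{D}}$, $A_h(\xi)=\langle h(\xi),h'(\xi)\xi\rangle$ for $\xi\in\mathbb{T}$. *)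

theory Defs
  imports "HOL-Analysis.Analysis"
begin

definition cinner :: "complex ^ 'd \<Rightarrow> complex ^ 'd \<Rightarrow> complex" where
  "cinner z w = (\<Sum>i\<in>UNIV. z $ i * cnj (w $ i))"

definition DA_kernel :: "complex ^ 'd \<Rightarrow> complex ^ 'd \<Rightarrow> complex" where
  "DA_kernel z w = 1 / (1 - cinner z w)"

definition psd_kernel_ball :: "(complex ^ 'd \<Rightarrow> complex ^ 'd \<Rightarrow> complex) \<Rightarrow> bool" where
  "psd_kernel_ball K \<longleftrightarrow>
     (\<forall>(n::nat) (z::nat \<Rightarrow> complex ^ 'd) (c::nat \<Rightarrow> complex).
        (\<forall>i<n. z i \<in> ball 0 1) \<longrightarrow>
        (let s = (\<Sum>i<n. \<Sum>j<n. cnj (c i) * c j * K (z i) (z j))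
         in Im s = 0 \<and> Re s \<ge> 0))"

text \<open>Membership in the Drury-Arveson space H^2_d (as a function on B_d), via
  Aronszajn's description of the RKHS with kernel DA_kernel:
  g belongs to the space iff C^2 K(z,w) - g(z) conj(g(w)) is a positive kernel for some C.\<close>
definition DA_space :: "(complex ^ 'd \<Rightarrow> complex) set" where
  "DA_space = {g. \<exists>C::real. C \<ge> 0 \<and>
      psd_kernel_ball (\<lambda>z w. complex_of_real (C\<^sup>2) * DA_kernel z w - g z * cnj (g w))}"

definition DA_multipliers :: "(complex ^ 'd \<Rightarrow> complex) set" where
  "DA_multipliers = {\<phi>. \<forall>g\<in>DA_space. (\<lambda>z. \<phi> z * g z) \<in> DA_space}"

definition DA_variety :: "(complex ^ 'd) set \<Rightarrow> bool" where
  "DA_variety V \<longleftrightarrow> (\<exists>S. S \<subseteq> DA_multipliers \<and>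
      V = {z \<in> ball 0 1. \<forall>\<phi>\<in>S. \<phi> z = 0})"

definition C2_on_cdisc :: "(complex \<Rightarrow> complex ^ 'd) \<Rightarrow> bool" where
  "C2_on_cdisc f \<longleftrightarrow>
     (\<exists>(D :: complex \<Rightarrow> (complex \<Rightarrow>\<^sub>L (complex ^ 'd)))
        (D2 :: complex \<Rightarrow> (complex \<Rightarrow>\<^sub>L (complex \<Rightarrow>\<^sub>L (complex ^ 'd)))).
        (\<forall>x\<in>cball 0 1. (f has_derivative blinfun_apply (D x)) (at x within cball 0 1)) \<and>
        (\<forall>x\<in>cball 0 1. (D has_derivative blinfun_apply (D2 x)) (at x within cball 0 1)) \<and>
        continuous_on (cball 0 1) D2)"

definition embedding_map :: "(complex \<Rightarrow> complex ^ 'd) \<Rightarrow> (complex ^ 'd) set \<Rightarrow> bool" where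
  "embedding_map f V \<longleftrightarrow>
     DA_variety V \<and>
     inj_on f (ball 0 1) \<and>
     (\<forall>i. (\<lambda>z. f z $ i) holomorphic_on ball 0 1) \<and>
     (\<forall>z\<in>ball 0 1. \<exists>i. deriv (\<lambda>w. f w $ i) z \<noteq> 0) \<and>
     V = f ` ball 0 1 \<and>
     C2_on_cdisc f \<and>
     (\<forall>x\<in>cball 0 1. norm (f x) = 1 \<longleftrightarrow> norm x = 1)"

text \<open>A_h(xi) = < h(xi), h'(xi) xi >, where h'(xi) xi is the (real) derivative of h
  within the closed disc at xi applied to the vector xi.\<close>
definition A_map :: "(complex \<Rightarrow> complex ^ 'd) \<Rightarrow> complex \<Rightarrow> complex" where
  "A_map h \<xi> = cinner (h \<xi>) (frechet_derivative h (at \<xi> within cball 0 1) \<xi>)"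

end

theory Submission imports Defs begin

text \<open>On the unit circle the Moebius map \<mu> satisfies \<mu>'(\<xi>) \<xi> = r \<mu>(\<xi>) with
  r = (1 - |\<alpha>|^2) / |\<alpha> - \<xi>|^2 real: it sends the radial direction at \<xi> to a real multiple
  of the radial direction at \<mu>(\<xi>). The chain rule and the real linearity of f' then pull
  the factor r out of the inner product. The derivatives within the closed disc involved
  are well defined, because a derivative within a convex set with nonempty interior is
  unique at every point of the set.\<close>

lemma has_derivative_unique_along_segment:
  fixes f :: "'a::real_normed_vector \<Rightarrow> 'b::real_normed_vector"
  assumes f1: "(f has_derivative f1) (at x within S)" and f2: "(f has_derivative f2) (at x within S)"
    and "d > 0" and segment: "\<And>t. 0 \<le> t \<Longrightarrow> t \<le> d \<Longrightarrow> x + t *\<^sub>R v \<in> S"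
  shows "f1 v = f2 v"
proof -
  let ?p = "\<lambda>t::real. x + t *\<^sub>R v"
  have p: "(?p has_derivative (\<lambda>t. t *\<^sub>R v)) (at 0 within {0..d})"
    by (auto intro!: derivative_eq_intros)
  have im: "?p ` {0..d} \<subseteq> S" using segment by auto
  have "linear f1" "linear f2" using f1 f2 has_derivative_linear by blast+
  moreover have "((f \<circ> ?p) has_derivative (f1 \<circ> (\<lambda>t. t *\<^sub>R v))) (at 0 within {0..d})"
    by (rule diff_chain_within[OF p]) (use has_derivative_subset[OF f1 im] in simp)
  moreover have "((f \<circ> ?p) has_derivative (f2 \<circ> (\<lambda>t. t *\<^sub>R v))) (at 0 within {0..d})"
    by (rule diff_chain_within[OF p]) (use has_derivative_subset[OF f2 im] in simp)
  ultimately have "((f \<circ> ?p) has_vector_derivative f1 v) (at 0 within {0..d})"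
     "((f \<circ> ?p) has_vector_derivative f2 v) (at 0 within {0..d})"
    unfolding has_vector_derivative_def by (simp_all add: o_def linear_scale)
  moreover have "at (0::real) within {0..d} \<noteq> bot"
    using \<open>d > 0\<close> by (simp add: trivial_limit_within islimpt_Icc)
  ultimately show ?thesis using vector_derivative_unique_within by blast
qed

lemma has_derivative_unique_within_convex:
  fixes f :: "'a::real_normed_vector \<Rightarrow> 'b::real_normed_vector"
  assumes f1: "(f has_derivative f1) (at x within S)" and f2: "(f has_derivative f2) (at x within S)"
    and "convex S" "x \<in> S" "interior S \<noteq> {}"
  shows "f1 = f2"
proof -
  have on_S: "f1 (y - x) = f2 (y - x)" if "y \<in> S" for y
  proof (rule has_derivative_unique_along_segment[OF f1 f2 zero_less_one])
    fix t :: real assume "0 \<le> t" "t \<le> 1"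
    then have "(1 - t) *\<^sub>R x + t *\<^sub>R y \<in> S"
      using \<open>convex S\<close> \<open>x \<in> S\<close> \<open>y \<in> S\<close> by (simp add: convexD_alt)
    then show "x + t *\<^sub>R (y - x) \<in> S" by (simp add: algebra_simps)
  qed
  obtain p r where "r > 0" and ball: "ball p r \<subseteq> S"
    using \<open>interior S \<noteq> {}\<close> by (metis all_not_in_conv mem_interior)
  have "linear f1" "linear f2" using f1 f2 has_derivative_linear by blast+
  show ?thesis
  proof
    fix w
    show "f1 w = f2 w"
    proof (cases "w = 0")
      case True
      then show ?thesis using \<open>linear f1\<close> \<open>linear f2\<close> by (simp add: linear_0)
    next
      case False
      define t where "t = r / (2 * norm w)"
      have "t > 0" using \<open>r > 0\<close> False by (simp add: t_def)
      have "norm (t *\<^sub>R w) < r" using \<open>r > 0\<close> False by (simp add: t_def)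
      then have "p + t *\<^sub>R w \<in> S" using ball by (simp add: dist_norm subset_iff)
      moreover have "p \<in> S" using ball \<open>r > 0\<close> by auto
      moreover have "t *\<^sub>R (f1 w - f2 w) =
          (f1 (p + t *\<^sub>R w - x) - f2 (p + t *\<^sub>R w - x)) - (f1 (p - x) - f2 (p - x))"
        using \<open>linear f1\<close> \<open>linear f2\<close>
        by (simp add: linear_add linear_diff linear_scale algebra_simps)
      ultimately have "t *\<^sub>R (f1 w - f2 w) = 0" by (simp add: on_S)
      then show ?thesis using \<open>t > 0\<close> by simp
    qed
  qed
qed

lemma frechet_derivative_within_convex:
  fixes f :: "'a::real_normed_vector \<Rightarrow> 'b::real_normed_vector"
  assumes "(f has_derivative f') (at x within S)" "convex S" "x \<in> S" "interior S \<noteq> {}"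
  shows "frechet_derivative f (at x within S) = f'"
  using assms frechet_derivative_works has_derivative_unique_within_convex
  by (metis differentiableI)

lemma A_map_eq:
  assumes "(h has_derivative h') (at \<xi> within cball 0 1)" "\<xi> \<in> cball 0 1"
  shows "A_map h \<xi> = cinner (h \<xi>) (h' \<xi>)"
  using assms by (simp add: A_map_def frechet_derivative_within_convex)

lemma cinner_scaleR_right: "cinner z (r *\<^sub>R w) = of_real r * cinner z w"
  unfolding cinner_def vector_scaleR_component
  by (simp add: sum_distrib_left scaleR_conv_of_real algebra_simps)

lemma A_map_comp:
  assumes f: "(f has_derivative f') (at (h \<xi>) within cball 0 1)"
    and h: "(h has_field_derivative h') (at \<xi> within cball 0 1)"
    and "h ` cball 0 1 \<subseteq> cball 0 1" "\<xi> \<in> cball 0 1"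
    and radial: "h' * \<xi> = r *\<^sub>R h \<xi>"
  shows "A_map (f \<circ> h) \<xi> = A_map f (h \<xi>) * of_real r"
proof -
  have "(f has_derivative f') (at (h \<xi>) within h ` cball 0 1)"
    using f \<open>h ` cball 0 1 \<subseteq> cball 0 1\<close> by (rule has_derivative_subset)
  with h have "((f \<circ> h) has_derivative (\<lambda>v. f' (h' * v))) (at \<xi> within cball 0 1)"
    unfolding has_field_derivative_def by (auto dest: diff_chain_within simp: o_def)
  then have "A_map (f \<circ> h) \<xi> = cinner (f (h \<xi>)) (f' (r *\<^sub>R h \<xi>))"
    using \<open>\<xi> \<in> cball 0 1\<close> by (simp add: A_map_eq radial)
  also have "\<dots> = of_real r * cinner (f (h \<xi>)) (f' (h \<xi>))"
    using has_derivative_linear[OF f] by (simp add: linear_scale cinner_scaleR_right)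
  also have "\<dots> = of_real r * A_map f (h \<xi>)"
    using f \<open>h ` cball 0 1 \<subseteq> cball 0 1\<close> \<open>\<xi> \<in> cball 0 1\<close> by (simp add: A_map_eq image_subset_iff)
  finally show ?thesis by (simp add: mult.commute)
qed

lemma moebius_norm_identity:
  fixes a z :: complex
  shows "(norm (1 - cnj a * z))\<^sup>2 - (norm (a - z))\<^sup>2 = (1 - (norm a)\<^sup>2) * (1 - (norm z)\<^sup>2)"
  unfolding cmod_power2 by (simp add: power2_eq_square algebra_simps)

lemma moebius_denominator_nonzero:
  fixes a z :: complex
  assumes "norm a < 1" "norm z \<le> 1"
  shows "1 - cnj a * z \<noteq> 0"
proof
  assume "1 - cnj a * z = 0"
  then have "norm (cnj a * z) = 1" by simp
  then have "norm a * norm z = 1" by (simp add: norm_mult)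
  moreover have "norm a * norm z < 1"
    using assms mult_left_le[OF assms(2) norm_ge_zero, of a] by linarith
  ultimately show False by simp
qed

lemma moebius_maps_cball:
  fixes lam a :: complex
  assumes "norm lam = 1" "norm a < 1"
  shows "(\<lambda>z. lam * (a - z) / (1 - cnj a * z)) ` cball 0 1 \<subseteq> cball 0 1"
proof clarsimp
  fix z :: complex assume "norm z \<le> 1"
  have "(norm a)\<^sup>2 \<le> 1" "(norm z)\<^sup>2 \<le> 1"
    using assms(2) \<open>norm z \<le> 1\<close> by (simp_all add: power_le_one)
  then have "(1 - (norm a)\<^sup>2) * (1 - (norm z)\<^sup>2) \<ge> 0" by simp
  then have "(norm (a - z))\<^sup>2 \<le> (norm (1 - cnj a * z))\<^sup>2"
    using moebius_norm_identity[of a z] by linarith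
  then have "norm (a - z) \<le> norm (1 - cnj a * z)" by (rule power2_le_imp_le) simp
  moreover have "1 - cnj a * z \<noteq> 0"
    using assms(2) \<open>norm z \<le> 1\<close> by (rule moebius_denominator_nonzero)
  ultimately show "norm (lam * (a - z) / (1 - cnj a * z)) \<le> 1"
    using assms(1) by (simp add: norm_mult norm_divide)
qed

lemma moebius_has_field_derivative:
  fixes lam a z :: complex
  assumes "1 - cnj a * z \<noteq> 0"
  shows "((\<lambda>z. lam * (a - z) / (1 - cnj a * z)) has_field_derivative
           lam * (cnj a * a - 1) / (1 - cnj a * z)\<^sup>2) (at z)"
  using assms
  by (auto intro!: derivative_eq_intros simp: power2_eq_square algebra_simps divide_simps)

lemma moebius_derivative_radial:
  fixes lam a \<xi> :: complex
  assumes "norm a < 1" "norm \<xi> = 1"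
  shows "lam * (cnj a * a - 1) / (1 - cnj a * \<xi>)\<^sup>2 * \<xi> =
           ((1 - (norm a)\<^sup>2) / (norm (a - \<xi>))\<^sup>2) *\<^sub>R (lam * (a - \<xi>) / (1 - cnj a * \<xi>))"
proof -
  define c where "c = cnj (a - \<xi>)"
  have "\<xi> * cnj \<xi> = 1" using assms(2) complex_norm_square[of \<xi>] by simp
  then have denom: "1 - cnj a * \<xi> = - \<xi> * c" by (simp add: c_def algebra_simps)
  have norm_diff: "complex_of_real ((norm (a - \<xi>))\<^sup>2) = (a - \<xi>) * c"
    unfolding c_def complex_norm_square ..
  have norm_a: "complex_of_real ((norm a)\<^sup>2) = a * cnj a"
    unfolding complex_norm_square ..
  have "a \<noteq> \<xi>" "\<xi> \<noteq> 0" "c \<noteq> 0" using assms by (auto simp: c_def)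
  then show ?thesis
    unfolding denom scaleR_conv_of_real of_real_divide of_real_diff of_real_1 norm_diff norm_a
    by (simp add: power2_eq_square field_simps)
qed

theorem lemma2p6:
  fixes f :: "complex \<Rightarrow> complex ^ 'd" and V :: "(complex ^ 'd) set"
    and lam \<alpha> :: complex
  assumes "embedding_map f V"
    and "norm lam = 1" and "norm \<alpha> < 1"
  defines "\<mu> \<equiv> (\<lambda>z. lam * (\<alpha> - z) / (1 - cnj \<alpha> * z))"
  shows "\<forall>\<xi>. norm \<xi> = 1 \<longrightarrow>
           A_map (f \<circ> \<mu>) \<xi> =
           A_map f (\<mu> \<xi>) * complex_of_real ((1 - (norm \<alpha>)\<^sup>2) / (norm (\<alpha> - \<xi>))\<^sup>2)"
proof (intro allI impI)
  fix \<xi> :: complex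
  assume "norm \<xi> = 1"
  have maps: "\<mu> ` cball 0 1 \<subseteq> cball 0 1"
    unfolding \<mu>_def using assms(2,3) by (rule moebius_maps_cball)
  have "\<xi> \<in> cball 0 1" using \<open>norm \<xi> = 1\<close> by simp
  then have "\<mu> \<xi> \<in> cball 0 1" using maps by blast
  then obtain f' where f': "(f has_derivative f') (at (\<mu> \<xi>) within cball 0 1)"
    using assms(1) unfolding embedding_map_def C2_on_cdisc_def by blast
  have "1 - cnj \<alpha> * \<xi> \<noteq> 0"
    using moebius_denominator_nonzero[OF assms(3)] \<open>norm \<xi> = 1\<close> by simp
  then have "(\<mu> has_field_derivative lam * (cnj \<alpha> * \<alpha> - 1) / (1 - cnj \<alpha> * \<xi>)\<^sup>2)
               (at \<xi> within cball 0 1)"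
    unfolding \<mu>_def by (rule has_field_derivative_at_within[OF moebius_has_field_derivative])
  from A_map_comp[OF f' this maps \<open>\<xi> \<in> cball 0 1\<close>] show "A_map (f \<circ> \<mu>) \<xi> =
      A_map f (\<mu> \<xi>) * complex_of_real ((1 - (norm \<alpha>)\<^sup>2) / (norm (\<alpha> - \<xi>))\<^sup>2)"
    unfolding \<mu>_def using moebius_derivative_radial[OF assms(3) \<open>norm \<xi> = 1\<close>] by blast
qed

end
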